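(* Let $c,h,\alpha,\beta\in\mathbb{C}$ and $l,\gamma\in\mathbb{C}^*$. (a) For every $k\in\frac12\mathbb{Z}$, $\mathbf{1}\otimes v_k\notin U(\mathcal{D})(\mathbf{1}\otimes v_{k+\frac12})$ in $M(c,h,l)\otimes A(\alpha,\beta,\gamma)$. (b) The $\mathcal{D}$-module $M(c,h,l)\otimes A(\alpha,\beta,\gamma)$ is not irreducible.
   Context: The mirror-twisted Heisenberg–Virasoro algebra $\mathcal{D}$ is the complex Lie algebra with basis $\{d_m,h_r,\mathbf{c},\mathbf{l}: m\in\mathbb{Z}, r\in\frac12+\mathbb{Z}\}$ and brackets $[d_m,d_n]=(m-n)d_{m+n}+\frac{m^3-m}{12}\delta_{m+n,0}\mathbf{c}$, $[d_m,h_r]=-rh_{m+r}$, $[h_r,h_s]=r\delta_{r+s,0}\mathbf{l}$, with $\mathbf{c},\mathbf{l}$ central. $\mathcal{D}^{+}=\mathrm{span}\{d_{n},h_{r}: n\in\mathbb{N}, r\in\frac12+\mathbb{Z}_{\ge0}\}$, $\mathcal{D}^0=\mathrm{span}\{d_0,\mathbf{c},\mathbf{l}\}$. The Verma module is $M(c,h,l)=U(\mathcal{D})\otimes_{U(\mathcal{D}^0\oplus\mathcal{D}^+)}\mathbb{C}\mathbf{1}$ with $d_0\mathbf{1}=h\mathbf{1}$, $\mathbf{c}\mathbf{1}=c\mathbf{1}$, $\mathbf{l}\mathbf{1}=l\mathbf{1}$, $\mathcal{D}^+\mathbf{1}=0$. $A(\alpha,\beta,\gamma)$ is the $\mathcal{D}$-module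 with basis $\{v_k:k\in\frac12\mathbb{Z}\}$ and $d_mv_k=(\alpha+\beta m-k)v_{m+k}$, $h_rv_n=v_{n+r}$ for $n\in\mathbb{Z}$, $h_rv_s=\gamma v_{r+s}$ for $s\in\frac12+\mathbb{Z}$, $\mathbf{c},\mathbf{l}$ acting as $0$. Tensor products carry the action $x(v\otimes w)=xv\otimes w+v\otimes xw$. *)

theory Defs
  imports Complex_Main "HOL-Library.Function_Algebras"
begin

text \<open>Basis of D.  Dd m = d_m (m in Z); Hh n = h_(n+1/2) (so every r in 1/2+Z is
  encoded by the unique integer n with r = n + 1/2); Cc = central c; Ll = central l.\<close>
datatype Dgen = Dd int | Hh int | Cc | Ll

definition hr :: "int \<Rightarrow> complex" where
  "hr n = of_int n + 1/2"

text \<open>Structure constants: brk x y z = coefficient of basis vector z in [x,y].\<close>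
fun brk :: "Dgen \<Rightarrow> Dgen \<Rightarrow> Dgen \<Rightarrow> complex" where
  "brk (Dd m) (Dd n) z =
     (if z = Dd (m + n) then of_int (m - n) else 0)
   + (if z = Cc \<and> m + n = 0 then (of_int m ^ 3 - of_int m) / 12 else 0)"
| "brk (Dd m) (Hh n) z = (if z = Hh (m + n) then - hr n else 0)"
| "brk (Hh n) (Dd m) z = (if z = Hh (m + n) then hr n else 0)"
| "brk (Hh n) (Hh n') z = (if z = Ll \<and> n + n' + 1 = 0 then hr n else 0)"
| "brk _ _ z = 0"

definition cscale :: "complex \<Rightarrow> ('a \<Rightarrow> complex) \<Rightarrow> ('a \<Rightarrow> complex)" where
  "cscale a f = (\<lambda>z. a * f z)"

abbreviation cspan :: "('a \<Rightarrow> complex) set \<Rightarrow> ('a \<Rightarrow> complex) set" where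
  "cspan \<equiv> module.span cscale"

abbreviation csubspace :: "('a \<Rightarrow> complex) set \<Rightarrow> bool" where
  "csubspace \<equiv> module.subspace cscale"

definition finsupp :: "('a \<Rightarrow> complex) set" where
  "finsupp = {f. finite {z. f z \<noteq> 0}}"

definition ind :: "'a \<Rightarrow> 'a \<Rightarrow> complex" where
  "ind a = (\<lambda>z. if z = a then 1 else 0)"

text \<open>Elements of T(D) are finitely supported functions Dgen list \<Rightarrow> complex
  (word w stands for the product of its letters).  sandwich a f b = a * f * b for words a b.\<close>
definition sandwich :: "Dgen list \<Rightarrow> (Dgen list \<Rightarrow> complex) \<Rightarrow> Dgen list \<Rightarrow> (Dgen list \<Rightarrow> complex)" where
  "sandwich a f b = (\<lambda>w. if length a + length b \<le> length w \<and> take (length a) w = a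
        \<and> drop (length w - length b) w = b
      then f (drop (length a) (take (length w - length b) w)) else 0)"

text \<open>x y - y x - [x,y], generating the ideal defining U(D).\<close>
definition lie_rel :: "Dgen \<Rightarrow> Dgen \<Rightarrow> (Dgen list \<Rightarrow> complex)" where
  "lie_rel x y = ind [x, y] - ind [y, x]
      - (\<lambda>w. case w of [z] \<Rightarrow> brk x y z | _ \<Rightarrow> 0)"

text \<open>Basis of D^0 + D^+ and the character by which it acts on the highest weight vector 1.\<close>
fun in_borel :: "Dgen \<Rightarrow> bool" where
  "in_borel (Dd m) = (m \<ge> 0)"
| "in_borel (Hh n) = (n \<ge> 0)"
| "in_borel Cc = True"
| "in_borel Ll = True"

fun borel_chi :: "complex \<Rightarrow> complex \<Rightarrow> complex \<Rightarrow> Dgen \<Rightarrow> complex" where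
  "borel_chi c h l (Dd m) = (if m = 0 then h else 0)"
| "borel_chi c h l (Hh n) = 0"
| "borel_chi c h l Cc = c"
| "borel_chi c h l Ll = l"

text \<open>Generators of the kernel K of T(D) \<rightarrow> M(c,h,l) = U(D) \<otimes>_{U(D^0+D^+)} C 1:
  the two-sided ideal of the Lie relations plus the left ideal generated by b - chi(b).\<close>
definition verma_kgen :: "complex \<Rightarrow> complex \<Rightarrow> complex \<Rightarrow> (Dgen list \<Rightarrow> complex) set" where
  "verma_kgen c h l =
     {sandwich a (lie_rel x y) b | a x y b. True}
   \<union> {sandwich a (ind [x] - cscale (borel_chi c h l x) (ind [])) [] | a x. in_borel x}"

text \<open>Basis vector v_k of A, k in 1/2 Z, is encoded by the integer j = 2k.
  The space T(D) \<otimes> A is realised as finitely supported functions on (word, j);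
  M \<otimes> A = (T(D) \<otimes> A) / (K \<otimes> A).\<close>

fun shA :: "Dgen \<Rightarrow> int" where
  "shA (Dd m) = 2 * m"
| "shA (Hh n) = 2 * n + 1"
| "shA Cc = 0"
| "shA Ll = 0"

text \<open>x v_(j/2) = coefA x j * v_((j + shA x)/2).\<close>
fun coefA :: "complex \<Rightarrow> complex \<Rightarrow> complex \<Rightarrow> Dgen \<Rightarrow> int \<Rightarrow> complex" where
  "coefA \<alpha> \<beta> \<gamma> (Dd m) j = \<alpha> + \<beta> * of_int m - of_int j / 2"
| "coefA \<alpha> \<beta> \<gamma> (Hh n) j = (if even j then 1 else \<gamma>)"
| "coefA \<alpha> \<beta> \<gamma> Cc j = 0"
| "coefA \<alpha> \<beta> \<gamma> Ll j = 0"

text \<open>Action of a basis element x on T(D) \<otimes> A: x(u \<otimes> v) = (x u) \<otimes> v + u \<otimes> (x v).\<close>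
definition actMA :: "complex \<Rightarrow> complex \<Rightarrow> complex \<Rightarrow> Dgen
    \<Rightarrow> (Dgen list \<times> int \<Rightarrow> complex) \<Rightarrow> (Dgen list \<times> int \<Rightarrow> complex)" where
  "actMA \<alpha> \<beta> \<gamma> x f = (\<lambda>(w, j).
      (case w of [] \<Rightarrow> 0 | y # w' \<Rightarrow> if y = x then f (w', j) else 0)
    + coefA \<alpha> \<beta> \<gamma> x (j - shA x) * f (w, j - shA x))"

definition KA :: "complex \<Rightarrow> complex \<Rightarrow> complex \<Rightarrow> (Dgen list \<times> int \<Rightarrow> complex) set" where
  "KA c h l = cspan {(\<lambda>(w, j). if j = j0 then g w else 0) | g j0. g \<in> verma_kgen c h l}"

definition one_v :: "int \<Rightarrow> (Dgen list \<times> int \<Rightarrow> complex)" where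
  "one_v j = ind ([], j)"

fun actw :: "(Dgen \<Rightarrow> 'v \<Rightarrow> 'v) \<Rightarrow> Dgen list \<Rightarrow> 'v \<Rightarrow> 'v" where
  "actw act [] u = u"
| "actw act (x # xs) u = act x (actw act xs u)"

text \<open>Preimage in T(D) \<otimes> A of the cyclic submodule U(D) [u] of (T(D) \<otimes> A)/K:
  spanned by K and all x1 ... xn u.\<close>
definition cyc :: "('v \<Rightarrow> complex) set \<Rightarrow> (Dgen \<Rightarrow> ('v \<Rightarrow> complex) \<Rightarrow> ('v \<Rightarrow> complex))
     \<Rightarrow> ('v \<Rightarrow> complex) \<Rightarrow> ('v \<Rightarrow> complex) set" where
  "cyc K act u = cspan (K \<union> {actw act xs u | xs. True})"

text \<open>Irreducibility of the D-module V/K (V = finitely supported functions):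
  V/K is nonzero and its only submodules are 0 and V/K.  Submodules of V/K correspond
  to subspaces S with K \<subseteq> S \<subseteq> V stable under the action of the basis of D.\<close>
definition quot_irreducible :: "('v \<Rightarrow> complex) set \<Rightarrow> (Dgen \<Rightarrow> ('v \<Rightarrow> complex) \<Rightarrow> ('v \<Rightarrow> complex)) \<Rightarrow> bool" where
  "quot_irreducible K act \<longleftrightarrow> K \<noteq> finsupp \<and>
     (\<forall>S. csubspace S \<and> K \<subseteq> S \<and> S \<subseteq> finsupp \<and> (\<forall>x. \<forall>f\<in>S. act x f \<in> S)
        \<longrightarrow> S = K \<or> S = finsupp)"

end

theory Submission
  imports Defs
begin

text \<open>
  Write \<open>e\<^sub>k\<close> for \<open>one_v k = 1 \<otimes> v\<^sub>k\<^sub>/\<^sub>2\<close>.  For an index \<open>j0\<close> we build a linear functional \<open>\<Lambda>\<close>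
  on \<open>T(D) \<otimes> A\<close> that vanishes on \<open>K \<otimes> A\<close>, i.e. a functional on \<open>M(c,h,l) \<otimes> A\<close>.  On
  \<open>w \<otimes> v\<close> with \<open>w\<close> a word in \<open>D\<^sup>-\<close> it is the coefficient of \<open>v\<^sub>j\<^sub>0\<^sub>/\<^sub>2\<close> in \<open>S(w) v\<close>, \<open>S\<close> the
  antipode; Borel letters (elements of \<open>D\<^sup>0 \<oplus> D\<^sup>+\<close>) are moved to the right end of a word,
  where they act on the highest weight vector by its character.  Compatibility with the Lie
  relations is a PBW-type induction on the length of words, driven by the Jacobi identity.

  By construction \<open>\<Lambda>\<close> kills \<open>D\<^sup>- \<cdot> (M \<otimes> A)\<close>, and a Borel element maps \<open>e\<^sub>k\<close> into \<open>K \<otimes> A\<close>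
  plus multiples of \<open>e\<^sub>k\<close> and \<open>e\<^sub>k\<^sub>'\<close> with \<open>k' \<ge> k\<close>.  Induction on \<open>n\<close> then gives
  \<open>\<Lambda>(x\<^sub>1 \<cdots> x\<^sub>n e\<^sub>k) = 0\<close> for all \<open>k > j0\<close>, while \<open>\<Lambda>(e\<^sub>j\<^sub>0) = 1\<close>.  This is (a); for (b), the
  submodule generated by \<open>e\<^sub>1\<close> neither lies in \<open>K \<otimes> A\<close> nor contains \<open>e\<^sub>0\<close>.
\<close>

fun bracket_support :: "Dgen \<Rightarrow> Dgen \<Rightarrow> Dgen list" where
  "bracket_support (Dd m) (Dd n) = [Dd (m + n), Cc]"
| "bracket_support (Dd m) (Hh n) = [Hh (m + n)]"
| "bracket_support (Hh n) (Dd m) = [Hh (m + n)]"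
| "bracket_support (Hh n) (Hh n') = [Ll]"
| "bracket_support _ _ = []"

text \<open>\<open>lin_brk x y g\<close> is the linear extension of \<open>g\<close> evaluated at \<open>[x, y]\<close>.\<close>
definition lin_brk :: "Dgen \<Rightarrow> Dgen \<Rightarrow> (Dgen \<Rightarrow> complex) \<Rightarrow> complex" where
  "lin_brk x y g = (\<Sum>z\<in>set (bracket_support x y). brk x y z * g z)"

lemma brk_nonzero_support: "brk x y z \<noteq> 0 \<Longrightarrow> z \<in> set (bracket_support x y)"
  by (cases x; cases y) (auto split: if_splits)

lemma bracket_support_commute: "set (bracket_support x y) = set (bracket_support y x)"
  by (cases x; cases y) (auto simp: add.commute)

lemma brk_antisym: "brk y x z = - brk x y z"
proof -
  \<comment> \<open>central terms carry a degree condition; solving it for one index makes the identity polynomial\<close>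
  have solve: "a + b = 0 \<Longrightarrow> b = - a" "a + (b + 1) = 0 \<Longrightarrow> b = - a - 1"
    "b + 1 = - a \<Longrightarrow> b = - a - 1" "a + b + 1 = 0 \<Longrightarrow> b = - a - 1" for a b :: int
    by simp_all
  show ?thesis
    by (cases x; cases y; auto simp: hr_def;
        (drule solve(2) | drule solve(3) | drule solve(4) | drule solve(1))?; clarify?;
        simp add: field_simps power3_eq_cube)
qed

lemma lin_brk_antisym: "lin_brk y x g = - lin_brk x y g"
  unfolding lin_brk_def
  by (subst bracket_support_commute) (simp only: brk_antisym[where x = x and y = y] mult_minus_left sum_negf)

lemma lin_brk_cong: "(\<And>z. brk x y z \<noteq> 0 \<Longrightarrow> g z = g' z) \<Longrightarrow> lin_brk x y g = lin_brk x y g'"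
  unfolding lin_brk_def by (rule sum.cong) auto

lemma lin_brk_add: "lin_brk x y (\<lambda>z. f z + g z) = lin_brk x y f + lin_brk x y g"
  unfolding lin_brk_def by (simp add: distrib_left sum.distrib)

lemma lin_brk_diff: "lin_brk x y (\<lambda>z. f z - g z) = lin_brk x y f - lin_brk x y g"
  unfolding lin_brk_def by (simp add: right_diff_distrib sum_subtractf)

lemma lin_brk_cmult: "lin_brk x y (\<lambda>z. a * f z) = a * lin_brk x y f"
  unfolding lin_brk_def by (simp add: sum_distrib_left ac_simps)

lemma lin_brk_uminus: "lin_brk x y (\<lambda>z. - f z) = - lin_brk x y f"
  using lin_brk_cmult[of x y "- 1" f] by simp

lemma lin_brk_swap: "lin_brk x y (\<lambda>z. lin_brk u t (F z)) = lin_brk u t (\<lambda>s. lin_brk x y (\<lambda>z. F z s))"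
  unfolding lin_brk_def sum_distrib_left
  by (subst sum.swap) (intro sum.cong refl, simp add: ac_simps)

lemma lin_brk_jacobi:
  "lin_brk y w (\<lambda>z. lin_brk x z g) - lin_brk x w (\<lambda>z. lin_brk y z g) = lin_brk x y (\<lambda>z. lin_brk z w g)"
proof -
  have solve: "a + (b + c) = 0 \<Longrightarrow> c = - a - b" "a + (b + (c + 1)) = 0 \<Longrightarrow> c = - a - b - 1"
    for a b c :: int
    by simp_all
  show ?thesis
    by (cases x; cases y; cases w; (simp add: lin_brk_def hr_def ac_simps del: mult_eq_0_iff)?;
        (intro conjI impI)?; (drule solve(2) | drule solve(1))?; clarify?;
        (simp add: field_simps power3_eq_cube)?)
qed

lemma lin_brk_jacobi_derivation:
  "lin_brk u x (\<lambda>t. lin_brk t y F) + lin_brk u y (\<lambda>t. lin_brk x t F) = lin_brk x y (\<lambda>z. lin_brk u z F)"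
proof -
  have "(\<lambda>t. lin_brk t y F) = (\<lambda>t. - lin_brk y t F)" "(\<lambda>z. lin_brk u z F) = (\<lambda>z. - lin_brk z u F)"
    by (intro ext lin_brk_antisym)+
  then show ?thesis
    using lin_brk_jacobi[of x y u F] lin_brk_antisym[of y u] lin_brk_antisym[of x u]
    by (simp add: lin_brk_uminus algebra_simps)
qed

lemma shA_brk: "brk x y z \<noteq> 0 \<Longrightarrow> shA z = shA x + shA y"
  by (cases x; cases y) (auto split: if_splits)

lemma in_borel_brk: "in_borel x \<Longrightarrow> in_borel y \<Longrightarrow> brk x y z \<noteq> 0 \<Longrightarrow> in_borel z"
  by (cases x; cases y) (auto split: if_splits)

lemma not_in_borel_brk: "\<not> in_borel x \<Longrightarrow> \<not> in_borel y \<Longrightarrow> brk x y z \<noteq> 0 \<Longrightarrow> \<not> in_borel z"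
  by (cases x; cases y) (auto split: if_splits)

lemma lin_brk_borel_chi: "in_borel x \<Longrightarrow> in_borel y \<Longrightarrow> lin_brk x y (borel_chi c h l) = 0"
  by (cases x; cases y) (auto simp: lin_brk_def add_nonneg_eq_0_iff)

lemma shA_borel_nonneg: "in_borel y \<Longrightarrow> shA y \<ge> 0"
  by (cases y) auto

lemma coefA_commutator:
  "coefA \<alpha> \<beta> \<gamma> y j * coefA \<alpha> \<beta> \<gamma> x (j + shA y) - coefA \<alpha> \<beta> \<gamma> x j * coefA \<alpha> \<beta> \<gamma> y (j + shA x)
   = lin_brk x y (\<lambda>z. coefA \<alpha> \<beta> \<gamma> z j)"
  by (cases x; cases y) (auto simp: lin_brk_def hr_def field_simps)

text \<open>\<open>ad_word u v F\<close> is \<open>F\<close>, extended linearly, applied to \<open>ad u\<close> acting on the word \<open>v\<close> as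
  a derivation.\<close>
fun ad_word :: "Dgen \<Rightarrow> Dgen list \<Rightarrow> (Dgen list \<Rightarrow> complex) \<Rightarrow> complex" where
  "ad_word u [] F = 0"
| "ad_word u (t # v) F = lin_brk u t (\<lambda>z. F (z # v)) + ad_word u v (\<lambda>v'. F (t # v'))"

lemma ad_word_cong [fundef_cong]:
  assumes "u = u'" "v = v'" "\<And>w. length w = length v' \<Longrightarrow> F w = G w"
  shows "ad_word u v F = ad_word u' v' G"
  using assms(3) unfolding assms(1,2)[symmetric]
proof (induction v arbitrary: F G)
  case (Cons t v)
  have "lin_brk u t (\<lambda>z. F (z # v)) = lin_brk u t (\<lambda>z. G (z # v))"
    using Cons.prems by simp
  moreover have "ad_word u v (\<lambda>w. F (t # w)) = ad_word u v (\<lambda>w. G (t # w))"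
    using Cons.prems by (intro Cons.IH) simp
  ultimately show ?case by simp
qed simp

lemma ad_word_append:
  "ad_word u (v @ v') F = ad_word u v (\<lambda>w. F (w @ v')) + ad_word u v' (\<lambda>w. F (v @ w))"
  by (induction v arbitrary: F) simp_all

lemma ad_word_diff: "ad_word u v (\<lambda>w. F w - G w) = ad_word u v F - ad_word u v G"
  by (induction v arbitrary: F G) (simp_all add: lin_brk_diff)

lemma ad_word_add: "ad_word u v (\<lambda>w. F w + G w) = ad_word u v F + ad_word u v G"
  by (induction v arbitrary: F G) (simp_all add: lin_brk_add)

lemma ad_word_cmult: "ad_word u v (\<lambda>w. a * F w) = a * ad_word u v F"
  by (induction v arbitrary: F) (simp_all add: lin_brk_cmult distrib_left)

lemma ad_word_uminus: "ad_word u v (\<lambda>w. - F w) = - ad_word u v F"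
  using ad_word_cmult[of u v "- 1" F] by simp

lemma ad_word_lin_brk: "ad_word u v (\<lambda>w. lin_brk x y (\<lambda>z. G z w)) = lin_brk x y (\<lambda>z. ad_word u v (G z))"
proof (induction v arbitrary: G)
  case Nil
  then show ?case by (simp add: lin_brk_def)
next
  case (Cons t v)
  have "lin_brk u t (\<lambda>s. lin_brk x y (\<lambda>z. G z (s # v))) = lin_brk x y (\<lambda>z. lin_brk u t (\<lambda>s. G z (s # v)))"
    by (rule lin_brk_swap[symmetric])
  then show ?case
    by (simp add: Cons.IH lin_brk_add)
qed

lemma ad_word_swap:
  assumes "\<And>w. length w = length v \<Longrightarrow> F w - F' w = lin_brk x y (\<lambda>z. G z w)"
  shows "ad_word u v F - ad_word u v F' = lin_brk x y (\<lambda>z. ad_word u v (G z))"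
proof -
  have "ad_word u v F - ad_word u v F' = ad_word u v (\<lambda>w. lin_brk x y (\<lambda>z. G z w))"
    using assms by (simp flip: ad_word_diff cong: ad_word_cong)
  then show ?thesis by (simp add: ad_word_lin_brk)
qed

lemma ad_word_commutator:
  "ad_word y v (\<lambda>w. ad_word x w F) - ad_word x v (\<lambda>w. ad_word y w F) = lin_brk x y (\<lambda>z. ad_word z v F)"
proof (induction v arbitrary: F)
  case Nil
  then show ?case by (simp add: lin_brk_def)
next
  case (Cons t v)
  have jacobi: "lin_brk y t (\<lambda>z. lin_brk x z (\<lambda>s. F (s # v))) - lin_brk x t (\<lambda>z. lin_brk y z (\<lambda>s. F (s # v)))
      = lin_brk x y (\<lambda>z. lin_brk z t (\<lambda>s. F (s # v)))"
    by (rule lin_brk_jacobi)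
  have IH: "ad_word y v (\<lambda>w. ad_word x w (\<lambda>w'. F (t # w'))) - ad_word x v (\<lambda>w. ad_word y w (\<lambda>w'. F (t # w')))
      = lin_brk x y (\<lambda>z. ad_word z v (\<lambda>w'. F (t # w')))"
    by (rule Cons.IH)
  have cross: "ad_word y v (\<lambda>w. lin_brk x t (\<lambda>s. F (s # w))) = lin_brk x t (\<lambda>s. ad_word y v (\<lambda>w. F (s # w)))"
    for x y by (rule ad_word_lin_brk)
  show ?case
    using jacobi IH
    by (simp add: ad_word_add lin_brk_add cross algebra_simps)
qed

section \<open>Normal ordering of words and the pairing with \<open>A\<close>\<close>

fun split_last_borel :: "Dgen list \<Rightarrow> (Dgen list \<times> Dgen \<times> Dgen list) option" where
  "split_last_borel [] = None"
| "split_last_borel (x # w) = (case split_last_borel w of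
      Some (a, y, b) \<Rightarrow> Some (x # a, y, b)
    | None \<Rightarrow> if in_borel x then Some ([], x, w) else None)"

lemma split_last_borel_None_iff: "split_last_borel w = None \<longleftrightarrow> (\<forall>t\<in>set w. \<not> in_borel t)"
  by (induction w) (auto split: option.splits)

lemma split_last_borel_SomeD:
  "split_last_borel w = Some (a, x, b) \<Longrightarrow> w = a @ x # b \<and> in_borel x \<and> (\<forall>t\<in>set b. \<not> in_borel t)"
proof (induction w arbitrary: a)
  case (Cons t w)
  then show ?case
    by (cases "split_last_borel w") (auto simp: split_last_borel_None_iff split: if_splits)
qed simp

lemma split_last_borel_append:
  "in_borel x \<Longrightarrow> \<forall>t\<in>set b. \<not> in_borel t \<Longrightarrow> split_last_borel (a @ x # b) = Some (a, x, b)"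
proof (induction a)
  case Nil
  then show ?case using split_last_borel_None_iff[of b] by simp
qed simp

lemma last_borel_decomp:
  assumes "\<exists>t\<in>set w. in_borel t"
  obtains a u b where "w = a @ u # b" "in_borel u" "\<forall>t\<in>set b. \<not> in_borel t"
proof -
  obtain a u b where "split_last_borel w = Some (a, u, b)"
    using assms split_last_borel_None_iff by (cases "split_last_borel w") auto
  then show thesis using that split_last_borel_SomeD by blast
qed

context
  fixes c h l \<alpha> \<beta> \<gamma> :: complex and j0 :: int
begin

fun antipode_coef :: "int \<Rightarrow> Dgen list \<Rightarrow> complex" where
  "antipode_coef j [] = (if j = j0 then 1 else 0)"
| "antipode_coef j (y # w) = - coefA \<alpha> \<beta> \<gamma> y j * antipode_coef (j + shA y) w"

text \<open>\<open>pairing j w\<close> is the value of \<open>\<Lambda>\<close> on \<open>w \<otimes> v\<^sub>j\<^sub>/\<^sub>2\<close>: the last Borel letter \<open>x\<close> of \<open>w\<close> is moved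
  to the right end, where it acts by \<open>borel_chi\<close>, the commutators \<open>[x, -]\<close> being picked up on the way;
  words without Borel letters are evaluated through the antipode by \<open>antipode_coef\<close>.\<close>
function pairing :: "int \<Rightarrow> Dgen list \<Rightarrow> complex" where
  "pairing j w = (case split_last_borel w of
      None \<Rightarrow> antipode_coef j w
    | Some (a, x, b) \<Rightarrow> borel_chi c h l x * pairing j (a @ b) + ad_word x b (\<lambda>v. pairing j (a @ v)))"
  by pat_completeness auto
termination
  by (relation "measure (\<lambda>(j, w). length w)") (auto dest!: split_last_borel_SomeD)

declare pairing.simps [simp del]

lemma pairing_nonborel: "\<forall>t\<in>set w. \<not> in_borel t \<Longrightarrow> pairing j w = antipode_coef j w"
  by (subst pairing.simps) (simp add: split_last_borel_None_iff[symmetric])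

lemma pairing_last_borel:
  "in_borel x \<Longrightarrow> \<forall>t\<in>set b. \<not> in_borel t \<Longrightarrow>
   pairing j (a @ x # b) = borel_chi c h l x * pairing j (a @ b) + ad_word x b (\<lambda>v. pairing j (a @ v))"
  by (subst pairing.simps) (simp add: split_last_borel_append)

lemma pairing_last_borel_append:
  assumes "in_borel u" "\<forall>t\<in>set b. \<not> in_borel t" "\<forall>t\<in>set r. \<not> in_borel t"
  shows "pairing j (a @ u # b @ r) = borel_chi c h l u * pairing j (a @ b @ r)
    + ad_word u b (\<lambda>w. pairing j (a @ w @ r)) + ad_word u r (\<lambda>w. pairing j (a @ b @ w))"
proof -
  have "\<forall>t\<in>set (b @ r). \<not> in_borel t"
    using assms(2,3) by auto
  from pairing_last_borel[OF assms(1) this, of j a] show ?thesis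
    by (simp add: ad_word_append add.assoc)
qed

lemma antipode_coef_swap:
  "antipode_coef j (a @ x # y # b) - antipode_coef j (a @ y # x # b) = lin_brk x y (\<lambda>z. antipode_coef j (a @ z # b))"
proof (induction a arbitrary: j)
  case Nil
  have "lin_brk x y (\<lambda>z. antipode_coef j (z # b))
      = lin_brk x y (\<lambda>z. (- antipode_coef (j + shA x + shA y) b) * coefA \<alpha> \<beta> \<gamma> z j)"
    by (rule lin_brk_cong) (simp add: shA_brk add.assoc)
  also have "\<dots> = (- antipode_coef (j + shA x + shA y) b) * lin_brk x y (\<lambda>z. coefA \<alpha> \<beta> \<gamma> z j)"
    by (rule lin_brk_cmult)
  also have "\<dots> = antipode_coef j (x # y # b) - antipode_coef j (y # x # b)"
    by (simp add: coefA_commutator[symmetric] algebra_simps)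
  finally show ?case by simp
next
  case (Cons t a)
  have "antipode_coef j ((t # a) @ x # y # b) - antipode_coef j ((t # a) @ y # x # b)
      = (- coefA \<alpha> \<beta> \<gamma> t j)
        * (antipode_coef (j + shA t) (a @ x # y # b) - antipode_coef (j + shA t) (a @ y # x # b))"
    by (simp add: algebra_simps)
  also have "\<dots> = (- coefA \<alpha> \<beta> \<gamma> t j) * lin_brk x y (\<lambda>z. antipode_coef (j + shA t) (a @ z # b))"
    by (simp only: Cons.IH)
  also have "\<dots> = lin_brk x y (\<lambda>z. antipode_coef j ((t # a) @ z # b))"
    by (subst lin_brk_cmult[symmetric]) simp
  finally show ?case .
qed

lemma pairing_nonborel_Cons:
  "\<not> in_borel y \<Longrightarrow> pairing j (y # w) = - coefA \<alpha> \<beta> \<gamma> y j * pairing (j + shA y) w"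
proof (induction "length w" arbitrary: w j rule: less_induct)
  case less
  show ?case
  proof (cases "\<exists>t\<in>set w. in_borel t")
    case False
    with less.prems show ?thesis by (simp add: pairing_nonborel)
  next
    case True
    then obtain a x b where w: "w = a @ x # b" and x: "in_borel x" and b: "\<forall>t\<in>set b. \<not> in_borel t"
      by (rule last_borel_decomp)
    have shorter: "pairing j (y # a @ v) = - coefA \<alpha> \<beta> \<gamma> y j * pairing (j + shA y) (a @ v)"
      if "length v = length b" for v
      using that by (intro less.hyps less.prems) (simp add: w)
    have "pairing j (y # w) = borel_chi c h l x * pairing j (y # a @ b) + ad_word x b (\<lambda>v. pairing j (y # a @ v))"
      using pairing_last_borel[OF x b, of j "y # a"] by (simp add: w)
    also have "\<dots> = - coefA \<alpha> \<beta> \<gamma> y j * pairing (j + shA y) w"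
      by (simp add: shorter w pairing_last_borel[OF x b] ad_word_cmult ad_word_uminus algebra_simps cong: ad_word_cong)
    finally show ?thesis .
  qed
qed

text \<open>The case lemmas below for \<open>pairing_swaps\<close> take the induction hypothesis of the proof of
  \<open>pairing_swaps\<close> (on \<open>length a + length b\<close>) as hypothesis \<open>IH\<close>.\<close>
definition pairing_swaps :: "int \<Rightarrow> Dgen list \<Rightarrow> Dgen \<Rightarrow> Dgen \<Rightarrow> Dgen list \<Rightarrow> bool" where
  "pairing_swaps j a x y b \<longleftrightarrow>
     pairing j (a @ x # y # b) - pairing j (a @ y # x # b) = lin_brk x y (\<lambda>z. pairing j (a @ z # b))"

lemma pairing_swaps_commute: "pairing_swaps j a y x b \<Longrightarrow> pairing_swaps j a x y b"
  unfolding pairing_swaps_def by (subst lin_brk_antisym) (simp add: algebra_simps)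

lemma pairing_swaps_nonborel:
  assumes "\<forall>t\<in>set (a @ x # y # b). \<not> in_borel t"
  shows "pairing_swaps j a x y b"
proof -
  have "lin_brk x y (\<lambda>z. pairing j (a @ z # b)) = lin_brk x y (\<lambda>z. antipode_coef j (a @ z # b))"
    using assms not_in_borel_brk[of x y] by (intro lin_brk_cong pairing_nonborel) auto
  with assms show ?thesis
    unfolding pairing_swaps_def by (simp add: pairing_nonborel antipode_coef_swap)
qed

lemma pairing_swaps_borel_nonborel:
  assumes x: "in_borel x" and "\<not> in_borel y" and b: "\<forall>t\<in>set b. \<not> in_borel t"
  shows "pairing_swaps j a x y b"
proof -
  have "pairing j (a @ x # y # b) = borel_chi c h l x * pairing j (a @ y # b)
      + lin_brk x y (\<lambda>z. pairing j (a @ z # b)) + ad_word x b (\<lambda>v. pairing j (a @ y # v))"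
    using pairing_last_borel[OF x, of "y # b"] assms by simp
  moreover have "pairing j (a @ y # x # b) = borel_chi c h l x * pairing j (a @ y # b)
      + ad_word x b (\<lambda>v. pairing j (a @ y # v))"
    using pairing_last_borel[OF x b, of j "a @ [y]"] by simp
  ultimately show ?thesis
    unfolding pairing_swaps_def by simp
qed

lemma pairing_move_borel:
  assumes u: "in_borel u"
    and IH: "\<And>a x y b. length a + length b < length p + length v \<Longrightarrow> pairing_swaps j a x y b"
  shows "pairing j (p @ u # v) = borel_chi c h l u * pairing j (p @ v) + ad_word u v (\<lambda>w. pairing j (p @ w))"
  using IH
proof (induction v arbitrary: p)
  case Nil
  then show ?case using pairing_last_borel[OF u, of "[]" j p] by simp
next
  case (Cons t v)
  have "pairing_swaps j p u t v"
    by (rule Cons.prems) simp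
  moreover have "pairing j ((p @ [t]) @ u # v)
      = borel_chi c h l u * pairing j ((p @ [t]) @ v) + ad_word u v (\<lambda>w. pairing j ((p @ [t]) @ w))"
    by (rule Cons.IH) (rule Cons.prems, simp)
  ultimately show ?case
    unfolding pairing_swaps_def by (simp add: algebra_simps)
qed

lemma pairing_swaps_borel_in_tail:
  assumes IH: "\<And>a' x' y' b'. length a' + length b' < length a + length b \<Longrightarrow> pairing_swaps j a' x' y' b'"
    and "\<exists>t\<in>set b. in_borel t"
  shows "pairing_swaps j a x y b"
proof -
  obtain b1 u b2 where b: "b = b1 @ u # b2" and u: "in_borel u" and b2: "\<forall>t\<in>set b2. \<not> in_borel t"
    using assms(2) by (rule last_borel_decomp)
  have expand: "pairing j (p @ u # b2) = borel_chi c h l u * pairing j (p @ b2) + ad_word u b2 (\<lambda>w. pairing j (p @ w))"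
    for p
    by (rule pairing_last_borel[OF u b2])
  have swap_short: "pairing_swaps j a x y (b1 @ w)" if "length w = length b2" for w
    using that by (intro IH) (simp add: b)
  have "ad_word u b2 (\<lambda>w. pairing j (a @ x # y # b1 @ w)) - ad_word u b2 (\<lambda>w. pairing j (a @ y # x # b1 @ w))
      = lin_brk x y (\<lambda>z. ad_word u b2 (\<lambda>w. pairing j (a @ z # b1 @ w)))"
    by (rule ad_word_swap) (use swap_short in \<open>simp add: pairing_swaps_def\<close>)
  moreover have "pairing_swaps j a x y (b1 @ b2)"
    by (rule swap_short) simp
  moreover have "lin_brk x y (\<lambda>z. pairing j (a @ z # b)) = lin_brk x y (\<lambda>z. borel_chi c h l u
      * pairing j (a @ z # b1 @ b2) + ad_word u b2 (\<lambda>w. pairing j (a @ z # b1 @ w)))"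
    using expand[of "a @ _ # b1"] by (simp add: b)
  ultimately show ?thesis
    using expand[of "a @ x # y # b1"] expand[of "a @ y # x # b1"]
    unfolding pairing_swaps_def by (simp add: b lin_brk_add lin_brk_cmult algebra_simps)
qed

lemma pairing_swaps_borel_pair:
  assumes IH: "\<And>a' x' y' b'. length a' + length b' < length a + length b \<Longrightarrow> pairing_swaps j a' x' y' b'"
    and x: "in_borel x" and y: "in_borel y" and b: "\<forall>t\<in>set b. \<not> in_borel t"
  shows "pairing_swaps j a x y b"
proof -
  define F where "F = (\<lambda>w. pairing j (a @ w))"
  have expand: "pairing j (a @ u # b) = borel_chi c h l u * F b + ad_word u b F" if "in_borel u" for u
    using pairing_last_borel[OF that b] by (simp add: F_def)
  have expand2: "pairing j (a @ u # u' # b) = borel_chi c h l u' * (borel_chi c h l u * F b + ad_word u b F)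
      + borel_chi c h l u * ad_word u' b F + ad_word u' b (\<lambda>w. ad_word u w F)"
    if u: "in_borel u" and u': "in_borel u'" for u u'
  proof -
    have "pairing j (a @ u # w) = borel_chi c h l u * F w + ad_word u w F" if "length w = length b" for w
      using pairing_move_borel[OF u] IH that by (simp add: F_def)
    then have "ad_word u' b (\<lambda>w. pairing j (a @ u # w))
        = borel_chi c h l u * ad_word u' b F + ad_word u' b (\<lambda>w. ad_word u w F)"
      by (simp add: ad_word_add ad_word_cmult cong: ad_word_cong)
    then show ?thesis
      using pairing_last_borel[OF u' b, of j "a @ [u]"] expand[OF u] by simp
  qed
  have "lin_brk x y (\<lambda>z. pairing j (a @ z # b)) = lin_brk x y (\<lambda>z. F b * borel_chi c h l z + ad_word z b F)"
    by (rule lin_brk_cong) (simp add: expand in_borel_brk[OF x y] mult.commute)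
  also have "\<dots> = lin_brk x y (\<lambda>z. ad_word z b F)"
    by (simp add: lin_brk_add lin_brk_cmult lin_brk_borel_chi[OF x y])
  finally show ?thesis
    using ad_word_commutator[of y b x F]
    unfolding pairing_swaps_def expand2[OF x y] expand2[OF y x] by (simp add: algebra_simps)
qed

lemma pairing_swaps_borel_in_head:
  assumes IH: "\<And>a' x' y' b'. length a' + length b' < length a + length b \<Longrightarrow> pairing_swaps j a' x' y' b'"
    and "\<exists>t\<in>set a. in_borel t"
    and x: "\<not> in_borel x" and y: "\<not> in_borel y" and b: "\<forall>t\<in>set b. \<not> in_borel t"
  shows "pairing_swaps j a x y b"
proof -
  obtain a1 u a2 where a: "a = a1 @ u # a2" and u: "in_borel u" and a2: "\<forall>t\<in>set a2. \<not> in_borel t"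
    using assms(2) by (rule last_borel_decomp)
  define q where "q = a1 @ a2"
  have short: "length q + length b < length a + length b"
    by (simp add: a q_def)
  have expand: "pairing j (a @ r) = borel_chi c h l u * pairing j (q @ r)
      + ad_word u a2 (\<lambda>w. pairing j (a1 @ w @ r)) + ad_word u r (\<lambda>w. pairing j (q @ w))"
    if "\<forall>t\<in>set r. \<not> in_borel t" for r
    using pairing_last_borel_append[OF u a2 that] by (simp add: a q_def)
  have swap_q: "pairing_swaps j q x' y' b'" if "length b' = length b" for x' y' b'
    using that short by (intro IH) simp
  have head: "ad_word u a2 (\<lambda>w. pairing j (a1 @ w @ x # y # b)) - ad_word u a2 (\<lambda>w. pairing j (a1 @ w @ y # x # b))
      = lin_brk x y (\<lambda>z. ad_word u a2 (\<lambda>w. pairing j (a1 @ w @ z # b)))"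
    by (rule ad_word_swap) (use IH[of "a1 @ _" b x y] in \<open>simp add: a pairing_swaps_def\<close>)
  have tail: "ad_word u b (\<lambda>w. pairing j (q @ x # y # w)) - ad_word u b (\<lambda>w. pairing j (q @ y # x # w))
      = lin_brk x y (\<lambda>z. ad_word u b (\<lambda>w. pairing j (q @ z # w)))"
    by (rule ad_word_swap) (use swap_q[where x' = x and y' = y] in \<open>simp add: pairing_swaps_def\<close>)
  define F where "F = (\<lambda>s. pairing j (q @ s # b))"
  have middle: "lin_brk u x (\<lambda>t. pairing j (q @ t # y # b)) - lin_brk u x (\<lambda>t. pairing j (q @ y # t # b))
      + (lin_brk u y (\<lambda>t. pairing j (q @ x # t # b)) - lin_brk u y (\<lambda>t. pairing j (q @ t # x # b)))
      = lin_brk u x (\<lambda>t. lin_brk t y F) + lin_brk u y (\<lambda>t. lin_brk x t F)"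
    using swap_q[of b] unfolding pairing_swaps_def F_def by (simp flip: lin_brk_diff)
  have "lin_brk x y (\<lambda>z. pairing j (a @ z # b)) = lin_brk x y (\<lambda>z. borel_chi c h l u * pairing j (q @ z # b)
      + ad_word u a2 (\<lambda>w. pairing j (a1 @ w @ z # b)) + lin_brk u z F
      + ad_word u b (\<lambda>w. pairing j (q @ z # w)))"
    by (rule lin_brk_cong) (use b not_in_borel_brk[OF x y] in \<open>simp add: expand F_def\<close>)
  then show ?thesis
    using swap_q[of b x y] head tail middle lin_brk_jacobi_derivation[of u x y F] x y b
    unfolding pairing_swaps_def by (simp add: expand lin_brk_add lin_brk_cmult algebra_simps)
qed

lemma pairing_swaps: "pairing_swaps j a x y b"
proof (induction "length a + length b" arbitrary: a x y b rule: less_induct)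
  case less
  then have IH: "\<And>a' x' y' b'. length a' + length b' < length a + length b \<Longrightarrow> pairing_swaps j a' x' y' b'"
    by blast
  show ?case
  proof (cases "\<exists>t\<in>set b. in_borel t")
    case True
    with IH show ?thesis by (rule pairing_swaps_borel_in_tail)
  next
    case b: False
    consider "in_borel x" "in_borel y" | "in_borel x" "\<not> in_borel y" | "\<not> in_borel x" "in_borel y"
      | "\<not> in_borel x" "\<not> in_borel y" "\<exists>t\<in>set a. in_borel t"
      | "\<forall>t\<in>set (a @ x # y # b). \<not> in_borel t"
      using b by auto
    then show ?thesis
    proof cases
      case 1
      then show ?thesis using b by (intro pairing_swaps_borel_pair[OF IH]) auto
    next
      case 2
      then show ?thesis using b by (intro pairing_swaps_borel_nonborel) auto
    next
      case 3
      then show ?thesis using b by (auto intro: pairing_swaps_commute pairing_swaps_borel_nonborel)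
    next
      case 4
      then show ?thesis using b by (intro pairing_swaps_borel_in_head[OF IH]) auto
    next
      case 5
      then show ?thesis by (rule pairing_swaps_nonborel)
    qed
  qed
qed

end

lemma sum_fun_apply: "(\<Sum>i\<in>S. F i) x = (\<Sum>i\<in>S. F i x :: 'b :: comm_monoid_add)"
  by (induction S rule: infinite_finite_induct) auto

lemma cscale_apply [simp]: "cscale a f x = a * f x"
  by (simp add: cscale_def)

interpretation cvs: module "cscale :: complex \<Rightarrow> ('a \<Rightarrow> complex) \<Rightarrow> 'a \<Rightarrow> complex"
  by unfold_locales (auto simp: cscale_def fun_eq_iff algebra_simps)

lemma ind_apply: "ind a z = (if z = a then 1 else 0)"
  by (simp add: ind_def)

lemma finsupp_iff: "f \<in> finsupp \<longleftrightarrow> finite {z. f z \<noteq> 0}"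
  by (simp add: finsupp_def)

lemma finsupp_add: "f \<in> finsupp \<Longrightarrow> g \<in> finsupp \<Longrightarrow> f + g \<in> finsupp"
  unfolding finsupp_iff by (rule finite_subset[of _ "{z. f z \<noteq> 0} \<union> {z. g z \<noteq> 0}"]) auto

lemma finsupp_scale: "f \<in> finsupp \<Longrightarrow> cscale a f \<in> finsupp"
  unfolding finsupp_iff by (rule finite_subset[of _ "{z. f z \<noteq> 0}"]) auto

lemma finsupp_ind: "ind a \<in> finsupp"
  unfolding finsupp_iff ind_def by simp

lemma one_v_finsupp: "one_v j \<in> finsupp"
  by (simp add: one_v_def finsupp_ind)

lemma finsupp_zero: "0 \<in> finsupp"
  by (simp add: finsupp_iff)

lemma subspace_finsupp: "csubspace finsupp"
  by (rule cvs.subspaceI) (auto intro: finsupp_add finsupp_scale finsupp_zero)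

lemma finsupp_diff: "f \<in> finsupp \<Longrightarrow> g \<in> finsupp \<Longrightarrow> f - g \<in> finsupp"
  by (rule cvs.subspace_diff[OF subspace_finsupp])

lemma finsupp_sum: "(\<And>i. i \<in> S \<Longrightarrow> F i \<in> finsupp) \<Longrightarrow> sum F S \<in> finsupp"
  by (rule cvs.subspace_sum[OF subspace_finsupp])

lemma finsupp_expansion: "f \<in> finsupp \<Longrightarrow> f = (\<Sum>p\<in>{p. f p \<noteq> 0}. cscale (f p) (ind p))"
proof (rule ext)
  fix x assume f: "f \<in> finsupp"
  have "(\<Sum>p\<in>{p. f p \<noteq> 0}. cscale (f p) (ind p)) x = (\<Sum>p\<in>{p. f p \<noteq> 0}. if x = p then f p else 0)"
    unfolding sum_fun_apply by (rule sum.cong) (auto simp: ind_apply)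
  also have "\<dots> = f x"
    using f by (simp add: finsupp_iff)
  finally show "f x = (\<Sum>p\<in>{p. f p \<noteq> 0}. cscale (f p) (ind p)) x" by simp
qed

lemma finsupp_in_subspace:
  assumes f: "f \<in> finsupp" and S: "csubspace S" and ind: "\<And>p. ind p \<in> S"
  shows "f \<in> S"
proof -
  have "(\<Sum>p\<in>{p. f p \<noteq> 0}. cscale (f p) (ind p)) \<in> S"
    by (intro cvs.subspace_sum[OF S] cvs.subspace_scale[OF S] ind)
  then show ?thesis using finsupp_expansion[OF f] by simp
qed

text \<open>\<open>lin_ext \<mu>\<close> is the linear functional with values \<open>\<mu>\<close> on the basis \<open>ind\<close>; it is
  meaningful on \<open>finsupp\<close> only.\<close>
definition lin_ext :: "('a \<Rightarrow> complex) \<Rightarrow> ('a \<Rightarrow> complex) \<Rightarrow> complex" where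
  "lin_ext \<mu> f = (\<Sum>p\<in>{p. f p \<noteq> 0}. f p * \<mu> p)"

lemma lin_ext_superset: "finite S \<Longrightarrow> {p. f p \<noteq> 0} \<subseteq> S \<Longrightarrow> lin_ext \<mu> f = (\<Sum>p\<in>S. f p * \<mu> p)"
  unfolding lin_ext_def by (rule sum.mono_neutral_left) auto

lemma lin_ext_add: "f \<in> finsupp \<Longrightarrow> g \<in> finsupp \<Longrightarrow> lin_ext \<mu> (f + g) = lin_ext \<mu> f + lin_ext \<mu> g"
proof -
  assume "f \<in> finsupp" "g \<in> finsupp"
  then have fin: "finite ({p. f p \<noteq> 0} \<union> {p. g p \<noteq> 0})" by (simp add: finsupp_iff)
  have "lin_ext \<mu> (f + g) = (\<Sum>p\<in>{p. f p \<noteq> 0} \<union> {p. g p \<noteq> 0}. f p * \<mu> p + g p * \<mu> p)"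
    by (subst lin_ext_superset[OF fin]) (auto simp: distrib_right)
  also have "\<dots> = lin_ext \<mu> f + lin_ext \<mu> g"
    by (simp add: sum.distrib lin_ext_superset[OF fin])
  finally show ?thesis .
qed

lemma lin_ext_scale: "lin_ext \<mu> (cscale a f) = a * lin_ext \<mu> f"
proof (cases "a = 0")
  case True then show ?thesis by (simp add: lin_ext_def cscale_def)
next
  case False
  then have "{p. cscale a f p \<noteq> 0} = {p. f p \<noteq> 0}" by auto
  then show ?thesis unfolding lin_ext_def by (simp add: sum_distrib_left ac_simps)
qed

lemma lin_ext_ind: "lin_ext \<mu> (ind p) = \<mu> p"
  by (subst lin_ext_superset[of "{p}"]) (auto simp: ind_apply)

lemma lin_ext_diff: "f \<in> finsupp \<Longrightarrow> g \<in> finsupp \<Longrightarrow> lin_ext \<mu> (f - g) = lin_ext \<mu> f - lin_ext \<mu> g"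
  using lin_ext_add[of f "cscale (- 1) g" \<mu>] finsupp_scale[of g "- 1"] lin_ext_scale[of \<mu> "- 1" g]
  by simp

lemma lin_ext_sum: "(\<And>i. i \<in> S \<Longrightarrow> F i \<in> finsupp) \<Longrightarrow> lin_ext \<mu> (sum F S) = (\<Sum>i\<in>S. lin_ext \<mu> (F i))"
proof (induction S rule: infinite_finite_induct)
  case (insert i S)
  have "lin_ext \<mu> (sum F (insert i S)) = lin_ext \<mu> (F i + sum F S)"
    by (simp only: sum.insert[OF insert.hyps])
  also have "\<dots> = lin_ext \<mu> (F i) + lin_ext \<mu> (sum F S)"
    by (rule lin_ext_add) (use insert.prems in \<open>auto intro: finsupp_sum\<close>)
  also have "lin_ext \<mu> (sum F S) = (\<Sum>i\<in>S. lin_ext \<mu> (F i))"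
    by (rule insert.IH) (use insert.prems in auto)
  finally show ?case by (simp only: sum.insert[OF insert.hyps])
qed (simp_all add: lin_ext_def)

lemma subspace_lin_ext_kernel: "csubspace {f. f \<in> finsupp \<and> lin_ext \<mu> f = 0}"
proof (rule cvs.subspaceI)
  show "0 \<in> {f. f \<in> finsupp \<and> lin_ext \<mu> f = 0}"
    by (simp add: finsupp_zero lin_ext_def)
qed (auto intro: finsupp_add finsupp_scale simp: lin_ext_add lin_ext_scale)

section \<open>The kernel \<open>K \<otimes> A\<close> and the functional \<open>\<Lambda>\<close>\<close>

lemma sandwich_decomp:
  assumes "length a + length b \<le> length w" "take (length a) w = a" "drop (length w - length b) w = b"
  shows "w = a @ drop (length a) (take (length w - length b) w) @ b"
proof -
  have "length a \<le> length w - length b"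
    using assms(1) by arith
  then have "take (length a) (take (length w - length b) w) = a"
    using assms(2) by (simp add: min_def)
  then have "take (length w - length b) w = a @ drop (length a) (take (length w - length b) w)"
    by (metis append_take_drop_id)
  then show ?thesis
    using assms(3) by (metis append_assoc append_take_drop_id)
qed

lemma sandwich_append [simp]: "sandwich a f b (a @ m @ b) = f m"
  by (simp add: sandwich_def)

lemma sandwich_other: "(\<And>m. w \<noteq> a @ m @ b) \<Longrightarrow> sandwich a f b w = 0"
  unfolding sandwich_def using sandwich_decomp by metis

lemma sandwich_Nil: "sandwich [] f [] = f"
  by (rule ext) (simp add: sandwich_def)

lemma sandwich_ind: "sandwich a (ind m) b = ind (a @ m @ b)"
proof (rule ext)
  fix w
  show "sandwich a (ind m) b w = ind (a @ m @ b) w"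
  proof (cases "\<exists>m'. w = a @ m' @ b")
    case True
    then obtain m' where "w = a @ m' @ b" by auto
    then show ?thesis by (simp add: ind_apply)
  next
    case False
    then show ?thesis by (auto simp: ind_apply intro!: sandwich_other)
  qed
qed

lemma sandwich_diff: "sandwich a (f - g) b = sandwich a f b - sandwich a g b"
  by (simp add: sandwich_def fun_eq_iff)

lemma sandwich_scale: "sandwich a (cscale s f) b = cscale s (sandwich a f b)"
  by (simp add: sandwich_def fun_eq_iff)

lemma sandwich_sum: "sandwich a (\<Sum>i\<in>S. F i) b = (\<Sum>i\<in>S. sandwich a (F i) b)"
proof (rule ext)
  have sum_if: "(\<Sum>i\<in>S. if P then f i else 0) = (if P then (\<Sum>i\<in>S. f i) else 0)"
    for P and f :: "_ \<Rightarrow> complex"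
    by simp
  show "sandwich a (\<Sum>i\<in>S. F i) b w = (\<Sum>i\<in>S. sandwich a (F i) b) w" for w
    unfolding sandwich_def sum_fun_apply sum_if ..
qed

lemma lie_rel_expand:
  "lie_rel x y = ind [x, y] - ind [y, x] - (\<Sum>z\<in>set (bracket_support x y). cscale (brk x y z) (ind [z]))"
proof (rule ext)
  fix w
  have "(\<Sum>z\<in>set (bracket_support x y). brk x y z * ind [z] w) = (case w of [z] \<Rightarrow> brk x y z | _ \<Rightarrow> 0)"
  proof (cases "\<exists>z. w = [z]")
    case True
    then obtain z where w: "w = [z]" by auto
    have "(\<Sum>z'\<in>set (bracket_support x y). brk x y z' * ind [z'] w)
        = (\<Sum>z'\<in>set (bracket_support x y). if z' = z then brk x y z' else 0)"
      by (rule sum.cong) (auto simp: w ind_apply)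
    also have "\<dots> = brk x y z"
      using brk_nonzero_support[of x y z] by (auto simp: sum.delta')
    finally show ?thesis by (simp add: w)
  next
    case False
    then show ?thesis
      by (cases w rule: remdups_adj.cases) (auto simp: ind_apply intro!: sum.neutral)
  qed
  then show "lie_rel x y w
      = (ind [x, y] - ind [y, x] - (\<Sum>z\<in>set (bracket_support x y). cscale (brk x y z) (ind [z]))) w"
    by (simp add: lie_rel_def sum_fun_apply)
qed

lemma sandwich_lie_rel: "sandwich a (lie_rel x y) b = ind (a @ x # y # b) - ind (a @ y # x # b)
    - (\<Sum>z\<in>set (bracket_support x y). cscale (brk x y z) (ind (a @ z # b)))"
  by (simp add: lie_rel_expand sandwich_diff sandwich_sum sandwich_scale sandwich_ind)

lemma sandwich_borel_rel: "sandwich a (ind [x] - cscale s (ind [])) [] = ind (a @ [x]) - cscale s (ind a)"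
  by (simp add: sandwich_diff sandwich_scale sandwich_ind)

lemma lin_ext_sandwich_lie_rel: "lin_ext \<mu> (sandwich a (lie_rel x y) b)
    = \<mu> (a @ x # y # b) - \<mu> (a @ y # x # b) - lin_brk x y (\<lambda>z. \<mu> (a @ z # b))"
  unfolding sandwich_lie_rel lin_brk_def
  by (simp add: lin_ext_diff lin_ext_sum lin_ext_scale lin_ext_ind finsupp_diff finsupp_ind finsupp_sum finsupp_scale)

lemma lin_ext_sandwich_borel_rel:
  "lin_ext \<mu> (sandwich a (ind [x] - cscale s (ind [])) []) = \<mu> (a @ [x]) - s * \<mu> a"
  unfolding sandwich_borel_rel by (simp add: lin_ext_diff lin_ext_scale lin_ext_ind finsupp_ind finsupp_scale)

lemma verma_kgen_finsupp: "g \<in> verma_kgen c h l \<Longrightarrow> g \<in> finsupp"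
  unfolding verma_kgen_def
  by (auto simp: sandwich_lie_rel sandwich_borel_rel intro!: finsupp_diff finsupp_ind finsupp_sum finsupp_scale)

definition embed_at :: "int \<Rightarrow> (Dgen list \<Rightarrow> complex) \<Rightarrow> (Dgen list \<times> int \<Rightarrow> complex)" where
  "embed_at j0 g = (\<lambda>(w, j). if j = j0 then g w else 0)"

lemma KA_eq: "KA c h l = cspan {embed_at j g | g j. g \<in> verma_kgen c h l}"
  unfolding KA_def embed_at_def ..

lemma embed_at_finsupp: "g \<in> finsupp \<Longrightarrow> embed_at j g \<in> finsupp"
proof -
  assume "g \<in> finsupp"
  moreover have "{p. embed_at j g p \<noteq> 0} \<subseteq> (\<lambda>w. (w, j)) ` {w. g w \<noteq> 0}"
    by (auto simp: embed_at_def split: if_splits)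
  ultimately show ?thesis
    unfolding finsupp_iff by (auto intro: finite_surj)
qed

lemma lin_ext_embed_at: "lin_ext \<mu> (embed_at j g) = lin_ext (\<lambda>w. \<mu> (w, j)) g"
proof -
  have "{p. embed_at j g p \<noteq> 0} = (\<lambda>w. (w, j)) ` {w. g w \<noteq> 0}"
    by (auto simp: embed_at_def split: if_splits)
  then have "lin_ext \<mu> (embed_at j g) = (\<Sum>w\<in>{w. g w \<noteq> 0}. embed_at j g (w, j) * \<mu> (w, j))"
    unfolding lin_ext_def by (simp add: sum.reindex inj_on_def)
  then show ?thesis
    by (simp add: lin_ext_def embed_at_def)
qed

lemma embed_at_diff: "embed_at j (f - g) = embed_at j f - embed_at j g"
  by (rule ext) (auto simp: embed_at_def)

lemma embed_at_scale: "embed_at j (cscale s f) = cscale s (embed_at j f)"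
  by (rule ext) (auto simp: embed_at_def)

lemma embed_at_sum: "embed_at j (\<Sum>i\<in>S. F i) = (\<Sum>i\<in>S. embed_at j (F i))"
  by (rule ext) (auto simp: embed_at_def sum_fun_apply)

lemma embed_at_ind: "embed_at j (ind w) = ind (w, j)"
  by (rule ext) (auto simp: embed_at_def ind_def split: if_splits)

lemma embed_at_in_KA: "g \<in> verma_kgen c h l \<Longrightarrow> embed_at j g \<in> KA c h l"
  unfolding KA_eq by (rule cvs.span_base) auto

lemma borel_rel_in_KA:
  "in_borel y \<Longrightarrow> embed_at j (ind [y] - cscale (borel_chi c h l y) (ind [])) \<in> KA c h l"
  by (rule embed_at_in_KA) (auto simp: verma_kgen_def sandwich_Nil intro!: exI[of _ "[]"])

lemma subspace_KA: "csubspace (KA c h l)"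
  unfolding KA_eq by (rule cvs.subspace_span)

lemma KA_finsupp: "KA c h l \<subseteq> finsupp"
  unfolding KA_eq
  by (rule cvs.span_minimal[OF _ subspace_finsupp]) (auto intro: embed_at_finsupp verma_kgen_finsupp)

definition pairing_lin :: "complex \<Rightarrow> complex \<Rightarrow> complex \<Rightarrow> complex \<Rightarrow> complex \<Rightarrow> complex \<Rightarrow> int
    \<Rightarrow> (Dgen list \<times> int \<Rightarrow> complex) \<Rightarrow> complex" where
  "pairing_lin c h l \<alpha> \<beta> \<gamma> j0 = lin_ext (\<lambda>(w, j). pairing c h l \<alpha> \<beta> \<gamma> j0 j w)"

lemma subspace_pairing_lin_kernel: "csubspace {f. f \<in> finsupp \<and> pairing_lin c h l \<alpha> \<beta> \<gamma> j0 f = 0}"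
  unfolding pairing_lin_def by (rule subspace_lin_ext_kernel)

lemma pairing_lin_ind: "pairing_lin c h l \<alpha> \<beta> \<gamma> j0 (ind (w, j)) = pairing c h l \<alpha> \<beta> \<gamma> j0 j w"
  by (simp add: pairing_lin_def lin_ext_ind)

lemma pairing_lin_verma_kgen: "g \<in> verma_kgen c h l \<Longrightarrow> pairing_lin c h l \<alpha> \<beta> \<gamma> j0 (embed_at j g) = 0"
  using pairing_swaps[unfolded pairing_swaps_def] pairing_last_borel[where b = "[]"]
  unfolding verma_kgen_def pairing_lin_def lin_ext_embed_at
  by (auto simp: lin_ext_sandwich_lie_rel lin_ext_sandwich_borel_rel)

lemma KA_subset_pairing_lin_kernel: "KA c h l \<subseteq> {f. f \<in> finsupp \<and> pairing_lin c h l \<alpha> \<beta> \<gamma> j0 f = 0}"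
  unfolding KA_eq pairing_lin_def
  by (rule cvs.span_minimal[OF _ subspace_lin_ext_kernel])
     (auto intro: embed_at_finsupp verma_kgen_finsupp simp: pairing_lin_verma_kgen[unfolded pairing_lin_def])

section \<open>The action on \<open>T(D) \<otimes> A\<close> modulo \<open>K \<otimes> A\<close>\<close>

context
  fixes c h l \<alpha> \<beta> \<gamma> :: complex and j0 :: int
begin

abbreviation (input) act :: "Dgen \<Rightarrow> (Dgen list \<times> int \<Rightarrow> complex) \<Rightarrow> (Dgen list \<times> int \<Rightarrow> complex)" where
  "act \<equiv> actMA \<alpha> \<beta> \<gamma>"

lemma actMA_add: "act x (f + g) = act x f + act x g"
  by (rule ext) (auto simp: actMA_def algebra_simps split: list.splits)

lemma actMA_scale: "act x (cscale s f) = cscale s (act x f)"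
  by (rule ext) (auto simp: actMA_def algebra_simps split: list.splits)

lemma actMA_zero: "act x 0 = 0"
  by (rule ext) (auto simp: actMA_def split: list.splits)

lemma actMA_diff: "act x (f - g) = act x f - act x g"
  by (rule ext) (auto simp: actMA_def algebra_simps split: list.splits)

lemma actMA_sum: "act x (\<Sum>i\<in>S. F i) = (\<Sum>i\<in>S. act x (F i))"
proof (induction S rule: infinite_finite_induct)
  case (infinite S)
  then show ?case by (simp only: sum.infinite[OF infinite] actMA_zero)
next
  case empty
  then show ?case by (simp only: sum.empty actMA_zero)
next
  case (insert i S)
  then show ?case by (simp only: sum.insert[OF insert.hyps] actMA_add)
qed

lemma actMA_ind:
  "act x (ind (w, j)) = ind (x # w, j) + cscale (coefA \<alpha> \<beta> \<gamma> x j) (ind (w, j + shA x))"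
proof (rule ext)
  fix p :: "Dgen list \<times> int"
  obtain w' j' where p: "p = (w', j')" by (cases p)
  show "act x (ind (w, j)) p = (ind (x # w, j) + cscale (coefA \<alpha> \<beta> \<gamma> x j) (ind (w, j + shA x))) p"
    unfolding p by (cases w') (auto simp: actMA_def ind_apply)
qed

lemma subspace_actMA_preimage: "csubspace S \<Longrightarrow> csubspace {f. act x f \<in> S}"
  by (rule cvs.subspaceI) (auto simp: actMA_add actMA_scale actMA_zero intro: cvs.subspace_add cvs.subspace_scale cvs.subspace_0)

lemma actMA_finsupp: "f \<in> finsupp \<Longrightarrow> act x f \<in> finsupp"
  using finsupp_in_subspace[OF _ subspace_actMA_preimage[OF subspace_finsupp]]
  by (force simp: actMA_ind finsupp_add finsupp_ind finsupp_scale)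

lemma actw_finsupp: "f \<in> finsupp \<Longrightarrow> actw (act) xs f \<in> finsupp"
  by (induction xs) (simp_all add: actMA_finsupp)

lemma actw_add: "actw (act) xs (f + g) = actw (act) xs f + actw (act) xs g"
  by (induction xs) (simp_all only: actw.simps actMA_add)

lemma actw_scale: "actw (act) xs (cscale s f) = cscale s (actw (act) xs f)"
  by (induction xs) (simp_all only: actw.simps actMA_scale)

definition left_mult :: "Dgen \<Rightarrow> (Dgen list \<Rightarrow> complex) \<Rightarrow> (Dgen list \<Rightarrow> complex)" where
  "left_mult x g = (\<lambda>w. case w of [] \<Rightarrow> 0 | y # w' \<Rightarrow> if y = x then g w' else 0)"

lemma left_mult_sandwich: "left_mult x (sandwich a f b) = sandwich (x # a) f b"
proof (rule ext)
  fix w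
  show "left_mult x (sandwich a f b) w = sandwich (x # a) f b w"
  proof (cases "\<exists>m. w = (x # a) @ m @ b")
    case True
    then obtain m where w: "w = (x # a) @ m @ b" by auto
    have "sandwich (x # a) f b w = f m" unfolding w by (rule sandwich_append)
    then show ?thesis by (simp add: left_mult_def w)
  next
    case False
    then have "sandwich (x # a) f b w = 0" "\<And>w'. w = x # w' \<Longrightarrow> sandwich a f b w' = 0"
      by (auto intro: sandwich_other)
    then show ?thesis by (auto simp: left_mult_def split: list.splits)
  qed
qed

lemma left_mult_verma_kgen: "g \<in> verma_kgen c h l \<Longrightarrow> left_mult x g \<in> verma_kgen c h l"
  unfolding verma_kgen_def by (auto simp: left_mult_sandwich) blast+

lemma actMA_embed_at:
  "act x (embed_at j g) = embed_at j (left_mult x g) + cscale (coefA \<alpha> \<beta> \<gamma> x j) (embed_at (j + shA x) g)"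
proof (rule ext)
  fix p :: "Dgen list \<times> int"
  obtain w' j' where p: "p = (w', j')" by (cases p)
  show "act x (embed_at j g) p
      = (embed_at j (left_mult x g) + cscale (coefA \<alpha> \<beta> \<gamma> x j) (embed_at (j + shA x) g)) p"
    unfolding p by (cases w') (auto simp: actMA_def embed_at_def left_mult_def)
qed

lemma actMA_KA: "f \<in> KA c h l \<Longrightarrow> act x f \<in> KA c h l"
proof -
  have "KA c h l \<subseteq> {f. act x f \<in> KA c h l}"
    by (subst (1) KA_eq, rule cvs.span_minimal[OF _ subspace_actMA_preimage[OF subspace_KA]])
       (auto simp: actMA_embed_at intro!: cvs.subspace_add[OF subspace_KA] cvs.subspace_scale[OF subspace_KA]
         embed_at_in_KA left_mult_verma_kgen)
  then show "f \<in> KA c h l \<Longrightarrow> act x f \<in> KA c h l" by auto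
qed

lemma actw_KA: "f \<in> KA c h l \<Longrightarrow> actw (act) xs f \<in> KA c h l"
  by (induction xs) (simp_all add: actMA_KA)

text \<open>\<open>act_brk x y\<close> is the action of \<open>[x, y]\<close>, and \<open>actw_ad y xs\<close> that of \<open>ad y\<close> applied to
  the word \<open>xs\<close> as a derivation.\<close>
definition act_brk :: "Dgen \<Rightarrow> Dgen \<Rightarrow> (Dgen list \<times> int \<Rightarrow> complex) \<Rightarrow> (Dgen list \<times> int \<Rightarrow> complex)" where
  "act_brk x y f = (\<Sum>z\<in>set (bracket_support x y). cscale (brk x y z) (act z f))"

lemma act_brk_ind: "act_brk x y (ind (w, j))
    = (\<Sum>z\<in>set (bracket_support x y). cscale (brk x y z) (ind (z # w, j)))
      + cscale (lin_brk x y (\<lambda>z. coefA \<alpha> \<beta> \<gamma> z j)) (ind (w, j + shA x + shA y))"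
proof -
  have "act_brk x y (ind (w, j)) = (\<Sum>z\<in>set (bracket_support x y). cscale (brk x y z) (ind (z # w, j))
      + cscale (brk x y z * coefA \<alpha> \<beta> \<gamma> z j) (ind (w, j + shA z)))"
    unfolding act_brk_def by (rule sum.cong) (auto simp: actMA_ind fun_eq_iff algebra_simps)
  also have "\<dots> = (\<Sum>z\<in>set (bracket_support x y). cscale (brk x y z) (ind (z # w, j)))
      + (\<Sum>z\<in>set (bracket_support x y). cscale (brk x y z * coefA \<alpha> \<beta> \<gamma> z j) (ind (w, j + shA x + shA y)))"
    unfolding sum.distrib
    by (intro arg_cong2[where f = "(+)"] refl sum.cong) (auto simp: shA_brk add.assoc fun_eq_iff)
  also have "(\<Sum>z\<in>set (bracket_support x y). cscale (brk x y z * coefA \<alpha> \<beta> \<gamma> z j) (ind (w, j + shA x + shA y)))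
      = cscale (lin_brk x y (\<lambda>z. coefA \<alpha> \<beta> \<gamma> z j)) (ind (w, j + shA x + shA y))"
    by (simp add: lin_brk_def fun_eq_iff sum_fun_apply sum_distrib_right)
  finally show ?thesis .
qed

lemma act_commutator_ind:
  "act x (act y (ind (w, j))) - act y (act x (ind (w, j))) - act_brk x y (ind (w, j))
   = embed_at j (sandwich [] (lie_rel x y) w)"
proof -
  have rel: "embed_at j (sandwich [] (lie_rel x y) w) = ind (x # y # w, j) - ind (y # x # w, j)
      - (\<Sum>z\<in>set (bracket_support x y). cscale (brk x y z) (ind (z # w, j)))"
    by (simp add: sandwich_lie_rel embed_at_diff embed_at_sum embed_at_scale embed_at_ind)
  show ?thesis
    unfolding rel act_brk_ind coefA_commutator[symmetric]
    by (rule ext) (auto simp: actMA_ind actMA_add actMA_scale ind_apply algebra_simps)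
qed

lemma act_commutator_KA:
  assumes "f \<in> finsupp"
  shows "act x (act y f) - act y (act x f) - act_brk x y f \<in> KA c h l"
proof -
  define defect where "defect f = act x (act y f) - act y (act x f) - act_brk x y f" for f
  have "csubspace {f. defect f \<in> KA c h l}"
  proof (rule cvs.subspaceI)
    show "0 \<in> {f. defect f \<in> KA c h l}"
      by (simp add: defect_def act_brk_def actMA_zero cvs.subspace_0[OF subspace_KA])
  next
    fix f g assume "f \<in> {f. defect f \<in> KA c h l}" "g \<in> {f. defect f \<in> KA c h l}"
    moreover have "defect (f + g) = defect f + defect g"
      by (simp add: defect_def act_brk_def actMA_add sum.distrib fun_eq_iff algebra_simps)
    ultimately show "f + g \<in> {f. defect f \<in> KA c h l}"
      by (simp add: cvs.subspace_add[OF subspace_KA])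
  next
    fix s f assume "f \<in> {f. defect f \<in> KA c h l}"
    moreover have "defect (cscale s f) = cscale s (defect f)"
      by (simp add: defect_def act_brk_def actMA_scale sum_fun_apply fun_eq_iff algebra_simps sum_distrib_left)
    ultimately show "cscale s f \<in> {f. defect f \<in> KA c h l}"
      by (simp add: cvs.subspace_scale[OF subspace_KA])
  qed
  moreover have "defect (ind (w, j)) \<in> KA c h l" for w j
    unfolding defect_def act_commutator_ind by (rule embed_at_in_KA) (auto simp: verma_kgen_def)
  ultimately show ?thesis
    using finsupp_in_subspace[OF assms] unfolding defect_def by force
qed

definition actw_ad :: "Dgen \<Rightarrow> Dgen list \<Rightarrow> (Dgen list \<times> int \<Rightarrow> complex) \<Rightarrow> (Dgen list \<times> int \<Rightarrow> complex)" where
  "actw_ad y xs f = (\<Sum>i<length xs. \<Sum>z\<in>set (bracket_support y (xs ! i)).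
      cscale (brk y (xs ! i) z) (actw act (xs[i := z]) f))"

lemma actw_ad_finsupp: "f \<in> finsupp \<Longrightarrow> actw_ad y xs f \<in> finsupp"
  unfolding actw_ad_def by (intro finsupp_sum finsupp_scale actw_finsupp)

lemma actw_ad_Cons: "actw_ad y (t # xs) f = act_brk y t (actw act xs f) + act t (actw_ad y xs f)"
  unfolding actw_ad_def act_brk_def
  by (simp only: length_Cons sum.lessThan_Suc_shift) (simp add: actMA_sum actMA_scale)

lemma actw_commutator_KA:
  assumes f: "f \<in> finsupp"
  shows "act y (actw act xs f) - actw act xs (act y f) - actw_ad y xs f \<in> KA c h l"
proof (induction xs)
  case Nil
  have "actw_ad y [] f = 0"
    by (simp add: actw_ad_def)
  then show ?case
    by (simp only: actw.simps diff_self diff_zero) (rule cvs.subspace_0[OF subspace_KA])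
next
  case (Cons t xs)
  define g where "g = actw act xs f"
  have "act y (act t g) - act t (act y g) - act_brk y t g \<in> KA c h l"
    by (rule act_commutator_KA) (simp add: g_def actw_finsupp f)
  moreover have "act t (act y g - actw act xs (act y f) - actw_ad y xs f) \<in> KA c h l"
    unfolding g_def by (rule actMA_KA[OF Cons.IH])
  moreover have "act y (actw act (t # xs) f) - actw act (t # xs) (act y f) - actw_ad y (t # xs) f
      = (act y (act t g) - act t (act y g) - act_brk y t g)
        + act t (act y g - actw act xs (act y f) - actw_ad y xs f)"
    by (simp add: actw_ad_Cons g_def actMA_diff)
  ultimately show ?case
    using cvs.subspace_add[OF subspace_KA] by metis
qed

abbreviation (input) \<Lambda> :: "(Dgen list \<times> int \<Rightarrow> complex) \<Rightarrow> complex" where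
  "\<Lambda> \<equiv> pairing_lin c h l \<alpha> \<beta> \<gamma> j0"

lemma pairing_lin_add: "f \<in> finsupp \<Longrightarrow> g \<in> finsupp \<Longrightarrow> \<Lambda> (f + g) = \<Lambda> f + \<Lambda> g"
  by (simp add: pairing_lin_def lin_ext_add)

lemma pairing_lin_scale: "\<Lambda> (cscale s f) = s * \<Lambda> f"
  by (simp add: pairing_lin_def lin_ext_scale)

lemma pairing_lin_sum: "(\<And>i. i \<in> S \<Longrightarrow> F i \<in> finsupp) \<Longrightarrow> \<Lambda> (sum F S) = (\<Sum>i\<in>S. \<Lambda> (F i))"
  by (simp add: pairing_lin_def lin_ext_sum)

lemma pairing_lin_KA: "f \<in> KA c h l \<Longrightarrow> \<Lambda> f = 0"
  using KA_subset_pairing_lin_kernel by blast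

lemma pairing_lin_one_v: "\<Lambda> (one_v j) = (if j = j0 then 1 else 0)"
  by (simp add: one_v_def pairing_lin_ind pairing_nonborel)

lemma pairing_lin_act_nonborel:
  assumes y: "\<not> in_borel y" and f: "f \<in> finsupp"
  shows "\<Lambda> (act y f) = 0"
proof -
  have "f \<in> {f. act y f \<in> {g. g \<in> finsupp \<and> \<Lambda> g = 0}}"
  proof (rule finsupp_in_subspace[OF f subspace_actMA_preimage[OF subspace_pairing_lin_kernel]])
    fix p :: "Dgen list \<times> int"
    obtain w j where p: "p = (w, j)" by (cases p)
    have "\<Lambda> (act y (ind p)) = pairing c h l \<alpha> \<beta> \<gamma> j0 j (y # w)
        + coefA \<alpha> \<beta> \<gamma> y j * pairing c h l \<alpha> \<beta> \<gamma> j0 (j + shA y) w"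
      by (simp add: p actMA_ind pairing_lin_add pairing_lin_scale pairing_lin_ind finsupp_ind finsupp_scale)
    then show "ind p \<in> {f. act y f \<in> {g. g \<in> finsupp \<and> \<Lambda> g = 0}}"
      by (simp add: pairing_nonborel_Cons[OF y] actMA_finsupp finsupp_ind)
  qed
  then show ?thesis by simp
qed

lemma act_one_v:
  "act y (one_v j) = embed_at j (ind [y] - cscale (borel_chi c h l y) (ind []))
     + cscale (borel_chi c h l y) (one_v j) + cscale (coefA \<alpha> \<beta> \<gamma> y j) (one_v (j + shA y))"
  unfolding one_v_def actMA_ind embed_at_diff embed_at_scale embed_at_ind by (simp add: algebra_simps)

lemma pairing_lin_cyclic_borel_step:
  assumes IH: "\<And>xs' k. length xs' = length xs \<Longrightarrow> j0 < k \<Longrightarrow> \<Lambda> (actw act xs' (one_v k)) = 0"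
    and y: "in_borel y" and j: "j0 < j"
  shows "\<Lambda> (act y (actw act xs (one_v j))) = 0"
proof -
  define rel where "rel = actw act xs (embed_at j (ind [y] - cscale (borel_chi c h l y) (ind [])))"
  have rel: "rel \<in> KA c h l"
    unfolding rel_def by (rule actw_KA[OF borel_rel_in_KA[OF y]])
  then have "rel \<in> finsupp"
    using KA_finsupp by blast
  then have "\<Lambda> (actw act xs (act y (one_v j))) = 0"
    using pairing_lin_KA[OF rel] IH[of xs j] IH[of xs "j + shA y"] j shA_borel_nonneg[OF y]
    unfolding act_one_v actw_add actw_scale rel_def[symmetric]
    by (simp add: pairing_lin_add pairing_lin_scale finsupp_add finsupp_scale actw_finsupp one_v_finsupp)
  moreover have "\<Lambda> (actw_ad y xs (one_v j)) = 0"
    using IH j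
    by (simp add: actw_ad_def pairing_lin_sum pairing_lin_scale finsupp_sum finsupp_scale actw_finsupp one_v_finsupp)
  moreover define k where "k = act y (actw act xs (one_v j)) - actw act xs (act y (one_v j)) - actw_ad y xs (one_v j)"
  then have k: "k \<in> KA c h l"
    by (simp add: actw_commutator_KA one_v_finsupp)
  moreover have "k \<in> finsupp"
    using k KA_finsupp by blast
  moreover have "act y (actw act xs (one_v j)) = k + actw act xs (act y (one_v j)) + actw_ad y xs (one_v j)"
    by (simp add: k_def)
  ultimately show ?thesis
    by (simp add: pairing_lin_KA[OF k] pairing_lin_add finsupp_add actw_finsupp actMA_finsupp actw_ad_finsupp
        one_v_finsupp)
qed

lemma pairing_lin_cyclic: "j0 < j \<Longrightarrow> \<Lambda> (actw act xs (one_v j)) = 0"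
proof (induction "length xs" arbitrary: xs j rule: less_induct)
  case less
  show ?case
  proof (cases xs)
    case Nil
    with less.prems show ?thesis by (simp add: pairing_lin_one_v)
  next
    case (Cons y xs')
    show ?thesis
    proof (cases "in_borel y")
      case False
      then show ?thesis by (simp add: Cons pairing_lin_act_nonborel actw_finsupp one_v_finsupp)
    next
      case True
      have "\<Lambda> (act y (actw act xs' (one_v j))) = 0"
        by (rule pairing_lin_cyclic_borel_step[OF less.hyps True less.prems]) (simp_all add: Cons)
      then show ?thesis by (simp add: Cons)
    qed
  qed
qed

end

lemma subspace_cyc: "csubspace (cyc K \<rho> u)"
  unfolding cyc_def by (rule cvs.subspace_span)

lemma generators_subset_cyc: "K \<subseteq> cyc K \<rho> u" "u \<in> cyc K \<rho> u"
proof -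
  have "u = actw \<rho> [] u" by simp
  then show "K \<subseteq> cyc K \<rho> u" "u \<in> cyc K \<rho> u"
    unfolding cyc_def by (blast intro: cvs.span_base)+
qed

lemma cyc_finsupp:
  "K \<subseteq> finsupp \<Longrightarrow> u \<in> finsupp \<Longrightarrow> cyc K (actMA \<alpha> \<beta> \<gamma>) u \<subseteq> finsupp"
  unfolding cyc_def by (rule cvs.span_minimal[OF _ subspace_finsupp]) (auto intro: actw_finsupp)

lemma cyc_actMA_closed:
  assumes K: "\<And>f. f \<in> K \<Longrightarrow> actMA \<alpha> \<beta> \<gamma> x f \<in> K" and f: "f \<in> cyc K (actMA \<alpha> \<beta> \<gamma>) u"
  shows "actMA \<alpha> \<beta> \<gamma> x f \<in> cyc K (actMA \<alpha> \<beta> \<gamma>) u"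
proof -
  have "K \<union> {actw (actMA \<alpha> \<beta> \<gamma>) xs u | xs. True} \<subseteq> {f. actMA \<alpha> \<beta> \<gamma> x f \<in> cyc K (actMA \<alpha> \<beta> \<gamma>) u}"
  proof safe
    fix f assume "f \<in> K"
    then show "actMA \<alpha> \<beta> \<gamma> x f \<in> cyc K (actMA \<alpha> \<beta> \<gamma>) u"
      using K generators_subset_cyc(1) by blast
  next
    fix xs
    have "actw (actMA \<alpha> \<beta> \<gamma>) (x # xs) u \<in> cyc K (actMA \<alpha> \<beta> \<gamma>) u"
      unfolding cyc_def by (rule cvs.span_base) blast
    then show "actMA \<alpha> \<beta> \<gamma> x (actw (actMA \<alpha> \<beta> \<gamma>) xs u) \<in> cyc K (actMA \<alpha> \<beta> \<gamma>) u"
      by simp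
  qed
  then have "cyc K (actMA \<alpha> \<beta> \<gamma>) u \<subseteq> {f. actMA \<alpha> \<beta> \<gamma> x f \<in> cyc K (actMA \<alpha> \<beta> \<gamma>) u}"
    unfolding cyc_def[of K _ u]
    by (rule cvs.span_minimal[OF _ subspace_actMA_preimage[OF subspace_cyc[unfolded cyc_def]]])
  with f show ?thesis by blast
qed

lemma one_v_notin_cyc:
  assumes "j < k"
  shows "one_v j \<notin> cyc (KA c h l) (actMA \<alpha> \<beta> \<gamma>) (one_v k)"
proof
  have "cyc (KA c h l) (actMA \<alpha> \<beta> \<gamma>) (one_v k) \<subseteq> {f. f \<in> finsupp \<and> pairing_lin c h l \<alpha> \<beta> \<gamma> j f = 0}"
    unfolding cyc_def
    by (rule cvs.span_minimal[OF _ subspace_pairing_lin_kernel])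
       (use KA_subset_pairing_lin_kernel pairing_lin_cyclic[OF assms] in \<open>auto intro: actw_finsupp one_v_finsupp\<close>)
  moreover assume "one_v j \<in> cyc (KA c h l) (actMA \<alpha> \<beta> \<gamma>) (one_v k)"
  ultimately show False
    by (auto simp: pairing_lin_one_v)
qed

theorem lemma3p4:
  fixes c h l \<alpha> \<beta> \<gamma> :: complex
  assumes "l \<noteq> 0" and "\<gamma> \<noteq> 0"
  shows "(\<forall>j::int. one_v j \<notin> cyc (KA c h l) (actMA \<alpha> \<beta> \<gamma>) (one_v (j + 1)))
       \<and> \<not> quot_irreducible (KA c h l) (actMA \<alpha> \<beta> \<gamma>)"
proof
  show "\<forall>j::int. one_v j \<notin> cyc (KA c h l) (actMA \<alpha> \<beta> \<gamma>) (one_v (j + 1))"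
    by (simp add: one_v_notin_cyc)
  define S where "S = cyc (KA c h l) (actMA \<alpha> \<beta> \<gamma>) (one_v 1)"
  have "csubspace S" "KA c h l \<subseteq> S" "S \<subseteq> finsupp"
    unfolding S_def by (simp_all add: subspace_cyc generators_subset_cyc cyc_finsupp KA_finsupp one_v_finsupp)
  moreover have "\<forall>x. \<forall>f\<in>S. actMA \<alpha> \<beta> \<gamma> x f \<in> S"
    unfolding S_def using cyc_actMA_closed[OF actMA_KA] by blast
  moreover have "one_v 1 \<notin> KA c h l"
    using one_v_notin_cyc[of 1 2] generators_subset_cyc(1) by fastforce
  moreover have "one_v 1 \<in> S" "one_v 0 \<notin> S"
    unfolding S_def by (simp_all add: generators_subset_cyc one_v_notin_cyc)
  ultimately show "\<not> quot_irreducible (KA c h l) (actMA \<alpha> \<beta> \<gamma>)"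
    unfolding quot_irreducible_def using one_v_finsupp by blast
qed

end
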